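(* Let $P=(X,\prec)$ be a finite twin-free interval order containing no induced subposet isomorphic to any of $\mathbf{4}+\mathbf{1}$, $\mathbf{3}+\mathbf{1}+\mathbf{1}$, $Z$, $D$, $Y$, or the dual of $Y$. Then there exists a closed interval representation $\{I(x):x\in X\}$ of $P$ such that: (1) no interval strictly contains two other intervals; (2) no interval is strictly contained in two other intervals; (3) if $I(u)\subsetneq I(v)$ then there are unique $x,y\in X$ such that $x$ peeks into $vu$ from the left and $y$ peeks into $vu$ from the right.
   Context: Posets are strict (irreflexive) partial orders; twins are points with exactly the same comparabilities; twin-free means no two distinct twins. A closed interval representation of $P$ assigns a closed real interval $I(x)=[L(x),R(x)]$ to each $x$ with $x\prec y$ iff $R(x)<L(y)$; $P$ is an interval order if one exists. $I(u)$ is strictly contained in $I(v)$ if $I(u)\subset I(v)$ and they do not have identical endpoints. For $u,v,x$ with $I(u)\subsetneq I(v)$: $x$ peeks into $vu$ if $I(x)$ meets $I(v)$ but not $I(u)$; from the left if moreover $R(x)\le L(u)$; from the right if moreover $R(u)\le L(x)$. Forbidden posets (unlisted, non-transitively-implied pairs incomparable): $\mathbf{4}+\mathbf{1}$: $a\prec b\prec c\prec d$ plus isolated $x$. $\mathbf{3}+\mathbf{1}+\mathbf{1}$: $a\prec b\prec c$ plus isolated $x,y$. $Z$: $a,b,c,d,x,y$ with $a\prec b\prec c\prec d$, $x\prec d$, $a\prec y$. $D$: $a,b,c,d,x$ with $a\prec b\prec d$, $a\prec c\prec d$. $Y$: $a,b,c,d,x$ with $a\prec d\prec b$, $a\prec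 d\prec c$. The dual reverses all comparabilities. *)

theory Defs
  imports Complex_Main
begin

definition strict_poset :: "'a set \<Rightarrow> ('a \<Rightarrow> 'a \<Rightarrow> bool) \<Rightarrow> bool" where
  "strict_poset X lt \<longleftrightarrow>
     (\<forall>x\<in>X. \<not> lt x x) \<and>
     (\<forall>x\<in>X. \<forall>y\<in>X. \<forall>z\<in>X. lt x y \<and> lt y z \<longrightarrow> lt x z)"

definition twins :: "'a set \<Rightarrow> ('a \<Rightarrow> 'a \<Rightarrow> bool) \<Rightarrow> 'a \<Rightarrow> 'a \<Rightarrow> bool" where
  "twins X lt x y \<longleftrightarrow> (\<forall>z\<in>X. (lt z x \<longleftrightarrow> lt z y) \<and> (lt x z \<longleftrightarrow> lt y z))"

definition twin_free :: "'a set \<Rightarrow> ('a \<Rightarrow> 'a \<Rightarrow> bool) \<Rightarrow> bool" where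
  "twin_free X lt \<longleftrightarrow> (\<forall>x\<in>X. \<forall>y\<in>X. x \<noteq> y \<longrightarrow> \<not> twins X lt x y)"

definition interval_rep :: "'a set \<Rightarrow> ('a \<Rightarrow> 'a \<Rightarrow> bool) \<Rightarrow> ('a \<Rightarrow> real) \<Rightarrow> ('a \<Rightarrow> real) \<Rightarrow> bool" where
  "interval_rep X lt L R \<longleftrightarrow>
     (\<forall>x\<in>X. L x \<le> R x) \<and> (\<forall>x\<in>X. \<forall>y\<in>X. lt x y \<longleftrightarrow> R x < L y)"

definition interval_order :: "'a set \<Rightarrow> ('a \<Rightarrow> 'a \<Rightarrow> bool) \<Rightarrow> bool" where
  "interval_order X lt \<longleftrightarrow> strict_poset X lt \<and> (\<exists>L R. interval_rep X lt L R)"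

text \<open>A forbidden poset on \<open>{..<n}\<close> whose order is the transitive closure of the cover pairs S.
  X contains an induced copy if there is an injective map preserving and reflecting the order.\<close>
definition contains_induced :: "'a set \<Rightarrow> ('a \<Rightarrow> 'a \<Rightarrow> bool) \<Rightarrow> nat \<Rightarrow> (nat \<times> nat) set \<Rightarrow> bool" where
  "contains_induced X lt n S \<longleftrightarrow>
     (\<exists>f. inj_on f {..<n} \<and> f ` {..<n} \<subseteq> X \<and>
          (\<forall>i<n. \<forall>j<n. lt (f i) (f j) \<longleftrightarrow> (i, j) \<in> S\<^sup>+))"

text \<open>4+1: a=0 < b=1 < c=2 < d=3, x=4 isolated.\<close>
definition four_plus_one :: "(nat \<times> nat) set" where
  "four_plus_one = {(0,1),(1,2),(2,3)}"

text \<open>3+1+1: a=0 < b=1 < c=2, x=3, y=4 isolated.\<close>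
definition three_plus_one_plus_one :: "(nat \<times> nat) set" where
  "three_plus_one_plus_one = {(0,1),(1,2)}"

text \<open>Z: a=0 < b=1 < c=2 < d=3, x=4 < d, a < y=5.\<close>
definition Z_poset :: "(nat \<times> nat) set" where
  "Z_poset = {(0,1),(1,2),(2,3),(4,3),(0,5)}"

text \<open>D: a=0 < b=1 < d=3, a < c=2 < d, x=4 isolated.\<close>
definition D_poset :: "(nat \<times> nat) set" where
  "D_poset = {(0,1),(1,3),(0,2),(2,3)}"

text \<open>Y: a=0 < d=3 < b=1, d < c=2, x=4 isolated.\<close>
definition Y_poset :: "(nat \<times> nat) set" where
  "Y_poset = {(0,3),(3,1),(3,2)}"

definition Y_dual_poset :: "(nat \<times> nat) set" where
  "Y_dual_poset = converse Y_poset"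

definition strictly_contained :: "('a \<Rightarrow> real) \<Rightarrow> ('a \<Rightarrow> real) \<Rightarrow> 'a \<Rightarrow> 'a \<Rightarrow> bool" where
  "strictly_contained L R u v \<longleftrightarrow>
     L v \<le> L u \<and> R u \<le> R v \<and> (L u, R u) \<noteq> (L v, R v)"

definition meets :: "('a \<Rightarrow> real) \<Rightarrow> ('a \<Rightarrow> real) \<Rightarrow> 'a \<Rightarrow> 'a \<Rightarrow> bool" where
  "meets L R x y \<longleftrightarrow> L x \<le> R y \<and> L y \<le> R x"

definition peeks :: "('a \<Rightarrow> real) \<Rightarrow> ('a \<Rightarrow> real) \<Rightarrow> 'a \<Rightarrow> 'a \<Rightarrow> 'a \<Rightarrow> bool" where
  "peeks L R x v u \<longleftrightarrow> meets L R x v \<and> \<not> meets L R x u"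

definition peeks_left :: "('a \<Rightarrow> real) \<Rightarrow> ('a \<Rightarrow> real) \<Rightarrow> 'a \<Rightarrow> 'a \<Rightarrow> 'a \<Rightarrow> bool" where
  "peeks_left L R x v u \<longleftrightarrow> peeks L R x v u \<and> R x \<le> L u"

definition peeks_right :: "('a \<Rightarrow> real) \<Rightarrow> ('a \<Rightarrow> real) \<Rightarrow> 'a \<Rightarrow> 'a \<Rightarrow> 'a \<Rightarrow> bool" where
  "peeks_right L R x v u \<longleftrightarrow> peeks L R x v u \<and> R u \<le> L x"

end

theory Submission
  imports Defs
begin

text \<open>Start from Fishburn's canonical representation with integer endpoints and perturb it
  lexicographically so that no two intervals share an endpoint. Then \<open>I(u) \<subsetneq> I(v)\<close> forces \<open>u\<close>
  and \<open>v\<close> to be incomparable, with some \<open>x \<prec> u\<close> and some \<open>y \<succ> u\<close> incomparable to \<open>v\<close>; these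
  are exactly the points peeking into \<open>vu\<close>. Two different left (right) peekers form a \<open>4+1\<close> or a
  dual \<open>Y\<close> (a \<open>Y\<close>); two intervals strictly inside \<open>v\<close> yield a \<open>4+1\<close>, a \<open>3+1+1\<close> or a \<open>D\<close>,
  using that interval orders are \<open>2+2\<close>-free. If \<open>I(u)\<close> lies strictly inside both \<open>I(v\<^sub>1)\<close> and
  \<open>I(v\<^sub>2)\<close>, uniqueness of the peekers together with \<open>2+2\<close>-freeness makes \<open>v\<^sub>1\<close> and \<open>v\<^sub>2\<close>
  twins.\<close>

abbreviation incomparable :: "('a \<Rightarrow> 'a \<Rightarrow> bool) \<Rightarrow> 'a \<Rightarrow> 'a \<Rightarrow> bool" where
  "incomparable lt x y \<equiv> \<not> lt x y \<and> \<not> lt y x"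

lemma strict_poset_irrefl: "strict_poset X lt \<Longrightarrow> x \<in> X \<Longrightarrow> \<not> lt x x"
  unfolding strict_poset_def by blast

lemma strict_poset_trans:
  "strict_poset X lt \<Longrightarrow> x \<in> X \<Longrightarrow> y \<in> X \<Longrightarrow> z \<in> X \<Longrightarrow> lt x y \<Longrightarrow> lt y z \<Longrightarrow> lt x z"
  unfolding strict_poset_def by blast

lemma strict_poset_asym: "strict_poset X lt \<Longrightarrow> x \<in> X \<Longrightarrow> y \<in> X \<Longrightarrow> lt x y \<Longrightarrow> \<not> lt y x"
  unfolding strict_poset_def by blast

lemma contains_induced_5I:
  assumes "distinct [a0, a1, a2, a3, a4]" and "{a0, a1, a2, a3, a4} \<subseteq> X" and "S\<^sup>+ = T"
    and "\<forall>i<5. \<forall>j<5. lt ([a0, a1, a2, a3, a4] ! i) ([a0, a1, a2, a3, a4] ! j) \<longleftrightarrow> (i, j) \<in> T"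
  shows "contains_induced X lt 5 S"
  unfolding contains_induced_def
proof (intro exI conjI)
  let ?f = "(!) [a0, a1, a2, a3, a4]"
  have "{..<5} = {0, 1, 2, 3, 4 :: nat}" by auto
  then show "?f ` {..<5} \<subseteq> X" using assms(2) by simp
  show "inj_on ?f {..<5}" using assms(1) by (intro inj_on_nth) auto
  show "\<forall>i<5. \<forall>j<5. lt (?f i) (?f j) \<longleftrightarrow> (i, j) \<in> S\<^sup>+" using assms(3,4) by simp
qed

lemma all_less_5: "(\<forall>i<5. P i) \<longleftrightarrow> P 0 \<and> P 1 \<and> P 2 \<and> P 3 \<and> P (4 :: nat)"
  by (auto simp: less_Suc_eq numeral_eq_Suc)

lemma four_plus_one_trancl: "four_plus_one\<^sup>+ = {(0,1), (1,2), (2,3), (0,2), (1,3), (0,3)}"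
  unfolding four_plus_one_def by code_simp

lemma four_plus_one_induced:
  assumes po: "strict_poset X lt" and X: "{a, b, c, d, x} \<subseteq> X"
    and chain: "lt a b" "lt b c" "lt c d"
    and isolated: "incomparable lt x a" "incomparable lt x b" "incomparable lt x c"
      "incomparable lt x d"
  shows "contains_induced X lt 5 four_plus_one"
proof -
  have up: "lt a c" "lt b d" "lt a d"
    using strict_poset_trans[OF po] X chain by (meson insert_subset)+
  have down: "\<not> lt b a" "\<not> lt c b" "\<not> lt d c" "\<not> lt c a" "\<not> lt d b" "\<not> lt d a"
    using strict_poset_asym[OF po] X chain up by (meson insert_subset)+
  have irr: "\<not> lt a a" "\<not> lt b b" "\<not> lt c c" "\<not> lt d d" "\<not> lt x x"
    using strict_poset_irrefl[OF po] X by auto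
  show ?thesis
  proof (rule contains_induced_5I[OF _ X four_plus_one_trancl])
    show "distinct [a, b, c, d, x]" using chain up irr isolated by auto
    show "\<forall>i<5. \<forall>j<5. lt ([a, b, c, d, x] ! i) ([a, b, c, d, x] ! j)
      \<longleftrightarrow> (i, j) \<in> {(0,1), (1,2), (2,3), (0,2), (1,3), (0,3)}"
      unfolding all_less_5 by (simp add: chain up down irr isolated)
  qed
qed

lemma three_plus_one_plus_one_trancl: "three_plus_one_plus_one\<^sup>+ = {(0,1), (1,2), (0,2)}"
  unfolding three_plus_one_plus_one_def by code_simp

lemma three_plus_one_plus_one_induced:
  assumes po: "strict_poset X lt" and X: "{a, b, c, x, y} \<subseteq> X" and "x \<noteq> y"
    and chain: "lt a b" "lt b c"
    and isolated: "incomparable lt x a" "incomparable lt x b" "incomparable lt x c"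
      "incomparable lt y a" "incomparable lt y b" "incomparable lt y c" "incomparable lt x y"
  shows "contains_induced X lt 5 three_plus_one_plus_one"
proof -
  have up: "lt a c"
    using strict_poset_trans[OF po] X chain by (meson insert_subset)
  have down: "\<not> lt b a" "\<not> lt c b" "\<not> lt c a"
    using strict_poset_asym[OF po] X chain up by (meson insert_subset)+
  have irr: "\<not> lt a a" "\<not> lt b b" "\<not> lt c c" "\<not> lt x x" "\<not> lt y y"
    using strict_poset_irrefl[OF po] X by auto
  show ?thesis
  proof (rule contains_induced_5I[OF _ X three_plus_one_plus_one_trancl])
    show "distinct [a, b, c, x, y]" using \<open>x \<noteq> y\<close> chain up irr isolated by auto
    show "\<forall>i<5. \<forall>j<5. lt ([a, b, c, x, y] ! i) ([a, b, c, x, y] ! j)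
      \<longleftrightarrow> (i, j) \<in> {(0,1), (1,2), (0,2)}"
      unfolding all_less_5 by (simp add: chain up down irr isolated)
  qed
qed

lemma D_poset_trancl: "D_poset\<^sup>+ = {(0,1), (1,3), (0,2), (2,3), (0,3)}"
  unfolding D_poset_def by code_simp

lemma D_poset_induced:
  assumes po: "strict_poset X lt" and X: "{a, b, c, d, x} \<subseteq> X" and "b \<noteq> c"
    and order: "lt a b" "lt b d" "lt a c" "lt c d" "incomparable lt b c"
    and isolated: "incomparable lt x a" "incomparable lt x b" "incomparable lt x c"
      "incomparable lt x d"
  shows "contains_induced X lt 5 D_poset"
proof -
  have up: "lt a d"
    using strict_poset_trans[OF po] X order by (meson insert_subset)
  have down: "\<not> lt b a" "\<not> lt d b" "\<not> lt c a" "\<not> lt d c" "\<not> lt d a"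
    using strict_poset_asym[OF po] X order up by (meson insert_subset)+
  have irr: "\<not> lt a a" "\<not> lt b b" "\<not> lt c c" "\<not> lt d d" "\<not> lt x x"
    using strict_poset_irrefl[OF po] X by auto
  show ?thesis
  proof (rule contains_induced_5I[OF _ X D_poset_trancl])
    show "distinct [a, b, c, d, x]" using \<open>b \<noteq> c\<close> order up irr isolated by auto
    show "\<forall>i<5. \<forall>j<5. lt ([a, b, c, d, x] ! i) ([a, b, c, d, x] ! j)
      \<longleftrightarrow> (i, j) \<in> {(0,1), (1,3), (0,2), (2,3), (0,3)}"
      unfolding all_less_5 by (simp add: order up down irr isolated)
  qed
qed

lemma Y_poset_trancl: "Y_poset\<^sup>+ = {(0,3), (3,1), (3,2), (0,1), (0,2)}"
  unfolding Y_poset_def by code_simp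

lemma Y_poset_induced:
  assumes po: "strict_poset X lt" and X: "{a, b, c, d, x} \<subseteq> X" and "b \<noteq> c"
    and order: "lt a d" "lt d b" "lt d c" "incomparable lt b c"
    and isolated: "incomparable lt x a" "incomparable lt x b" "incomparable lt x c"
      "incomparable lt x d"
  shows "contains_induced X lt 5 Y_poset"
proof -
  have up: "lt a b" "lt a c"
    using strict_poset_trans[OF po] X order by (meson insert_subset)+
  have down: "\<not> lt d a" "\<not> lt b d" "\<not> lt c d" "\<not> lt b a" "\<not> lt c a"
    using strict_poset_asym[OF po] X order up by (meson insert_subset)+
  have irr: "\<not> lt a a" "\<not> lt b b" "\<not> lt c c" "\<not> lt d d" "\<not> lt x x"
    using strict_poset_irrefl[OF po] X by auto
  show ?thesis
  proof (rule contains_induced_5I[OF _ X Y_poset_trancl])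
    show "distinct [a, b, c, d, x]" using \<open>b \<noteq> c\<close> order up irr isolated by auto
    show "\<forall>i<5. \<forall>j<5. lt ([a, b, c, d, x] ! i) ([a, b, c, d, x] ! j)
      \<longleftrightarrow> (i, j) \<in> {(0,3), (3,1), (3,2), (0,1), (0,2)}"
      unfolding all_less_5 by (simp add: order up down irr isolated)
  qed
qed

lemma Y_dual_poset_trancl: "Y_dual_poset\<^sup>+ = {(3,0), (1,3), (2,3), (1,0), (2,0)}"
  unfolding Y_dual_poset_def Y_poset_def by code_simp

lemma Y_dual_poset_induced:
  assumes po: "strict_poset X lt" and X: "{a, b, c, d, x} \<subseteq> X" and "b \<noteq> c"
    and order: "lt d a" "lt b d" "lt c d" "incomparable lt b c"
    and isolated: "incomparable lt x a" "incomparable lt x b" "incomparable lt x c"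
      "incomparable lt x d"
  shows "contains_induced X lt 5 Y_dual_poset"
proof -
  have up: "lt b a" "lt c a"
    using strict_poset_trans[OF po] X order by (meson insert_subset)+
  have down: "\<not> lt a d" "\<not> lt d b" "\<not> lt d c" "\<not> lt a b" "\<not> lt a c"
    using strict_poset_asym[OF po] X order up by (meson insert_subset)+
  have irr: "\<not> lt a a" "\<not> lt b b" "\<not> lt c c" "\<not> lt d d" "\<not> lt x x"
    using strict_poset_irrefl[OF po] X by auto
  show ?thesis
  proof (rule contains_induced_5I[OF _ X Y_dual_poset_trancl])
    show "distinct [a, b, c, d, x]" using \<open>b \<noteq> c\<close> order up irr isolated by auto
    show "\<forall>i<5. \<forall>j<5. lt ([a, b, c, d, x] ! i) ([a, b, c, d, x] ! j)
      \<longleftrightarrow> (i, j) \<in> {(3,0), (1,3), (2,3), (1,0), (2,0)}"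
      unfolding all_less_5 by (simp add: order up down irr isolated)
  qed
qed

definition two_plus_two_free :: "'a set \<Rightarrow> ('a \<Rightarrow> 'a \<Rightarrow> bool) \<Rightarrow> bool" where
  "two_plus_two_free X lt \<longleftrightarrow>
     (\<forall>a\<in>X. \<forall>b\<in>X. \<forall>c\<in>X. \<forall>d\<in>X. lt a b \<and> lt c d \<longrightarrow> lt a d \<or> lt c b)"

lemma two_plus_two_freeD:
  "two_plus_two_free X lt \<Longrightarrow> a \<in> X \<Longrightarrow> b \<in> X \<Longrightarrow> c \<in> X \<Longrightarrow> d \<in> X \<Longrightarrow> lt a b \<Longrightarrow> lt c d
    \<Longrightarrow> lt a d \<or> lt c b"
  unfolding two_plus_two_free_def by blast

lemma interval_order_two_plus_two_free:
  assumes "interval_order X lt" shows "two_plus_two_free X lt"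
  unfolding two_plus_two_free_def
proof (intro ballI impI)
  fix a b c d assume X: "a \<in> X" "b \<in> X" "c \<in> X" "d \<in> X" and "lt a b \<and> lt c d"
  obtain L R where rep: "interval_rep X lt L R" using assms unfolding interval_order_def by blast
  then have "R a < L b" "R c < L d" "L b \<le> R b" "L d \<le> R d"
    using X \<open>lt a b \<and> lt c d\<close> unfolding interval_rep_def by auto
  moreover have "lt a d \<longleftrightarrow> R a < L d" "lt c b \<longleftrightarrow> R c < L b"
    using rep X unfolding interval_rep_def by auto
  ultimately show "lt a d \<or> lt c b" by linarith
qed

definition down_set :: "'a set \<Rightarrow> ('a \<Rightarrow> 'a \<Rightarrow> bool) \<Rightarrow> 'a \<Rightarrow> 'a set" where
  "down_set X lt x = {y \<in> X. lt y x}"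

text \<open>Fishburn's canonical representation: \<open>x\<close> gets the interval from the size of its down-set
  to the largest such size among the elements not above \<open>x\<close>.\<close>

definition left_rank :: "'a set \<Rightarrow> ('a \<Rightarrow> 'a \<Rightarrow> bool) \<Rightarrow> 'a \<Rightarrow> nat" where
  "left_rank X lt x = card (down_set X lt x)"

definition right_rank :: "'a set \<Rightarrow> ('a \<Rightarrow> 'a \<Rightarrow> bool) \<Rightarrow> 'a \<Rightarrow> nat" where
  "right_rank X lt x = Max (left_rank X lt ` {y \<in> X. \<not> lt x y})"

lemma left_rank_le_card: "finite X \<Longrightarrow> left_rank X lt x \<le> card X"
  unfolding left_rank_def down_set_def by (rule card_mono) auto

lemma left_rank_less:
  assumes "finite X" "two_plus_two_free X lt" "x \<in> X" "y \<in> X" "z \<in> X" "lt x y" "\<not> lt x z"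
  shows "left_rank X lt z < left_rank X lt y"
  unfolding left_rank_def
proof (rule psubset_card_mono)
  show "finite (down_set X lt y)" using \<open>finite X\<close> unfolding down_set_def by simp
  have "lt w y" if "w \<in> X" "lt w z" for w
    using two_plus_two_freeD[OF \<open>two_plus_two_free X lt\<close> that(1) \<open>z \<in> X\<close> \<open>x \<in> X\<close> \<open>y \<in> X\<close>] assms that
    by blast
  then show "down_set X lt z \<subset> down_set X lt y"
    using assms unfolding down_set_def by auto
qed

lemma left_rank_le_right_rank:
  "finite X \<Longrightarrow> z \<in> X \<Longrightarrow> \<not> lt x z \<Longrightarrow> left_rank X lt z \<le> right_rank X lt x"
  unfolding right_rank_def by (intro Max_ge) auto

lemma right_rank_attained:
  assumes "finite X" "strict_poset X lt" "x \<in> X"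
  obtains z where "z \<in> X" "\<not> lt x z" "left_rank X lt z = right_rank X lt x"
proof -
  have "right_rank X lt x \<in> left_rank X lt ` {y \<in> X. \<not> lt x y}"
    unfolding right_rank_def using assms strict_poset_irrefl[OF assms(2,3)] by (intro Max_in) auto
  then show ?thesis using that by auto
qed

lemma canonical_rep_less_iff:
  assumes "finite X" "strict_poset X lt" "two_plus_two_free X lt" "x \<in> X" "y \<in> X"
  shows "lt x y \<longleftrightarrow> right_rank X lt x < left_rank X lt y"
proof
  assume "lt x y"
  obtain z where z: "z \<in> X" "\<not> lt x z" "left_rank X lt z = right_rank X lt x"
    using right_rank_attained[OF assms(1,2,4)] by blast
  then show "right_rank X lt x < left_rank X lt y"
    using left_rank_less[OF assms(1,3,4,5) z(1) \<open>lt x y\<close> z(2)] by simp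
next
  show "right_rank X lt x < left_rank X lt y \<Longrightarrow> lt x y"
    using left_rank_le_right_rank[OF assms(1,5)] by fastforce
qed

lemma canonical_rep_bounds:
  assumes "finite X" "strict_poset X lt" "x \<in> X"
  shows "left_rank X lt x \<le> right_rank X lt x \<and> right_rank X lt x \<le> card X"
proof
  show "left_rank X lt x \<le> right_rank X lt x"
    using left_rank_le_right_rank[OF assms(1,3)] strict_poset_irrefl[OF assms(2,3)] .
  obtain z where "left_rank X lt z = right_rank X lt x"
    using right_rank_attained[OF assms] by blast
  then show "right_rank X lt x \<le> card X"
    using left_rank_le_card[OF assms(1)] by metis
qed

lemma lex_less_iff:
  fixes a b c d M :: nat
  assumes "b < M" "d < M"
  shows "a * M + b < c * M + d \<longleftrightarrow> a < c \<or> a = c \<and> b < d"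
proof -
  have less: "a' * M + b' < c' * M + d'" if "a' < c'" "b' < M" for a' b' c' d'
  proof -
    have "a' * M + b' < Suc a' * M" using that by simp
    also have "\<dots> \<le> c' * M" using that by (intro mult_le_mono1) simp
    finally show ?thesis by simp
  qed
  show ?thesis
    using less[of a c b d] less[of c a d b] assms by (cases a c rule: linorder_cases) auto
qed

text \<open>Encoding \<open>[l, r]\<close> as \<open>[l M + r, r M + H + l]\<close> orders endpoints lexicographically:
  comparabilities are unchanged, but two intervals sharing an endpoint are separated at that
  endpoint, so a strict containment forces strict inequalities at both ends.\<close>

lemma interval_rep_without_shared_endpoints:
  fixes l r :: "'a \<Rightarrow> nat"
  assumes bounds: "\<forall>x\<in>X. l x \<le> r x \<and> r x \<le> K"
    and order: "\<forall>x\<in>X. \<forall>y\<in>X. lt x y \<longleftrightarrow> r x < l y"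
  shows "\<exists>L R. interval_rep X lt L R \<and>
    (\<forall>u\<in>X. \<forall>v\<in>X. strictly_contained L R u v \<longrightarrow> l v < l u \<and> r u < r v)"
proof (intro exI conjI)
  define H where "H = K + 1"
  define M where "M = 2 * H"
  define L where "L x = real (l x * M + r x)" for x
  define R where "R x = real (r x * M + (H + l x))" for x
  have small: "l x < M" "r x < M" "H + l x < M" "r x < H" if "x \<in> X" for x
    using bounds that unfolding M_def H_def by auto
  have R_less_L: "R x < L y \<longleftrightarrow> r x < l y \<or> r x = l y \<and> H + l x < r y" if "x \<in> X" "y \<in> X" for x y
    unfolding L_def R_def of_nat_less_iff using small that by (simp add: lex_less_iff)
  have L_less_L: "L x < L y \<longleftrightarrow> l x < l y \<or> l x = l y \<and> r x < r y" if "x \<in> X" "y \<in> X" for x y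
    unfolding L_def of_nat_less_iff using small that by (simp add: lex_less_iff)
  have R_less_R: "R x < R y \<longleftrightarrow> r x < r y \<or> r x = r y \<and> l x < l y" if "x \<in> X" "y \<in> X" for x y
    unfolding R_def of_nat_less_iff using small that by (simp add: lex_less_iff)
  show "interval_rep X lt L R"
    unfolding interval_rep_def
  proof (intro conjI ballI)
    show "L x \<le> R x" if "x \<in> X" for x
      using R_less_L[OF that that] bounds small(4)[OF that] that by force
    show "lt x y \<longleftrightarrow> R x < L y" if "x \<in> X" "y \<in> X" for x y
      using R_less_L[OF that] order small(4)[OF that(2)] that by force
  qed
  show "\<forall>u\<in>X. \<forall>v\<in>X. strictly_contained L R u v \<longrightarrow> l v < l u \<and> r u < r v"
  proof (intro ballI impI)
    fix u v assume "u \<in> X" "v \<in> X" "strictly_contained L R u v"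
    then have "\<not> L u < L v" "\<not> R v < R u" "L u \<noteq> L v \<or> R u \<noteq> R v"
      unfolding strictly_contained_def by auto
    then show "l v < l u \<and> r u < r v"
      using L_less_L[OF \<open>u \<in> X\<close> \<open>v \<in> X\<close>] R_less_R[OF \<open>v \<in> X\<close> \<open>u \<in> X\<close>]
      unfolding L_def R_def by auto
  qed
qed

text \<open>The order-theoretic shadow of \<open>I(u) \<subsetneq> I(v)\<close>: the witnesses are the points that peek into
  \<open>vu\<close> from the left and from the right.\<close>

definition nested_in :: "'a set \<Rightarrow> ('a \<Rightarrow> 'a \<Rightarrow> bool) \<Rightarrow> 'a \<Rightarrow> 'a \<Rightarrow> bool" where
  "nested_in X lt u v \<longleftrightarrow> incomparable lt u v \<and>
     (\<exists>x\<in>X. lt x u \<and> incomparable lt x v) \<and> (\<exists>y\<in>X. lt u y \<and> incomparable lt y v)"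

lemma nested_if_ranks_strictly_inside:
  assumes fin: "finite X" and po: "strict_poset X lt" and ff: "two_plus_two_free X lt"
    and "u \<in> X" "v \<in> X"
    and left_strict: "left_rank X lt v < left_rank X lt u"
    and right_strict: "right_rank X lt u < right_rank X lt v"
  shows "nested_in X lt u v"
proof -
  have less_iff: "lt x y \<longleftrightarrow> right_rank X lt x < left_rank X lt y" if "x \<in> X" "y \<in> X" for x y
    using canonical_rep_less_iff[OF fin po ff that] .
  have uv: "incomparable lt u v"
    using less_iff[OF \<open>u \<in> X\<close> \<open>v \<in> X\<close>] less_iff[OF \<open>v \<in> X\<close> \<open>u \<in> X\<close>] left_strict right_strict
      canonical_rep_bounds[OF fin po \<open>u \<in> X\<close>] by linarith
  have "\<not> down_set X lt u \<subseteq> down_set X lt v"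
    using card_mono[of "down_set X lt v" "down_set X lt u"] fin left_strict
    unfolding left_rank_def down_set_def by auto
  then obtain x where x: "x \<in> X" "lt x u" "\<not> lt x v" unfolding down_set_def by auto
  obtain y where y: "y \<in> X" "\<not> lt v y" "left_rank X lt y = right_rank X lt v"
    using right_rank_attained[OF fin po \<open>v \<in> X\<close>] by blast
  have "lt u y"
    using left_rank_le_right_rank[OF fin y(1), where x = u] right_strict y(3) by fastforce
  moreover have "\<not> lt v x" "\<not> lt y v"
    using strict_poset_trans[OF po] \<open>u \<in> X\<close> \<open>v \<in> X\<close> x y uv \<open>lt u y\<close> by blast+
  ultimately show ?thesis unfolding nested_in_def using uv x y by blast
qed

lemma interval_rep_strictly_contained_nested:
  assumes fin: "finite X" and po: "strict_poset X lt" and ff: "two_plus_two_free X lt"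
  shows "\<exists>L R. interval_rep X lt L R \<and>
    (\<forall>u\<in>X. \<forall>v\<in>X. strictly_contained L R u v \<longrightarrow> nested_in X lt u v)"
proof -
  have bounds: "\<forall>x\<in>X. left_rank X lt x \<le> right_rank X lt x \<and> right_rank X lt x \<le> card X"
    using canonical_rep_bounds[OF fin po] by blast
  have order: "\<forall>x\<in>X. \<forall>y\<in>X. lt x y \<longleftrightarrow> right_rank X lt x < left_rank X lt y"
    using canonical_rep_less_iff[OF fin po ff] by blast
  obtain L R where rep: "interval_rep X lt L R"
    and inside: "\<forall>u\<in>X. \<forall>v\<in>X. strictly_contained L R u v \<longrightarrow>
      left_rank X lt v < left_rank X lt u \<and> right_rank X lt u < right_rank X lt v"
    using interval_rep_without_shared_endpoints[OF bounds order] by blast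
  have "nested_in X lt u v" if "u \<in> X" "v \<in> X" "strictly_contained L R u v" for u v
    using nested_if_ranks_strictly_inside[OF fin po ff that(1,2)] inside that by blast
  with rep show ?thesis by blast
qed

lemma nested_in_left_witness_unique:
  assumes po: "strict_poset X lt" and no_41: "\<not> contains_induced X lt 5 four_plus_one"
    and no_Yd: "\<not> contains_induced X lt 5 Y_dual_poset"
    and X: "u \<in> X" "v \<in> X" "x1 \<in> X" "x2 \<in> X" and "nested_in X lt u v"
    and x1: "lt x1 u" "incomparable lt x1 v" and x2: "lt x2 u" "incomparable lt x2 v"
  shows "x1 = x2"
proof (rule ccontr)
  assume "x1 \<noteq> x2"
  obtain y where y: "y \<in> X" "lt u y" "incomparable lt y v" and uv: "incomparable lt u v"
    using \<open>nested_in X lt u v\<close> unfolding nested_in_def by blast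
  consider "lt x1 x2" | "lt x2 x1" | "incomparable lt x1 x2" by blast
  then show False
  proof cases
    case 1
    show False
      by (rule notE[OF no_41 four_plus_one_induced[OF po, of x1 x2 u y v]])
        (use X y uv x1 x2 1 in simp_all)
  next
    case 2
    show False
      by (rule notE[OF no_41 four_plus_one_induced[OF po, of x2 x1 u y v]])
        (use X y uv x1 x2 2 in simp_all)
  next
    case 3
    show False
      by (rule notE[OF no_Yd Y_dual_poset_induced[OF po, of y x1 x2 u v]])
        (use X y uv x1 x2 3 \<open>x1 \<noteq> x2\<close> in simp_all)
  qed
qed

lemma nested_in_right_witness_unique:
  assumes po: "strict_poset X lt" and no_41: "\<not> contains_induced X lt 5 four_plus_one"
    and no_Y: "\<not> contains_induced X lt 5 Y_poset"
    and X: "u \<in> X" "v \<in> X" "y1 \<in> X" "y2 \<in> X" and "nested_in X lt u v"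
    and y1: "lt u y1" "incomparable lt y1 v" and y2: "lt u y2" "incomparable lt y2 v"
  shows "y1 = y2"
proof (rule ccontr)
  assume "y1 \<noteq> y2"
  obtain x where x: "x \<in> X" "lt x u" "incomparable lt x v" and uv: "incomparable lt u v"
    using \<open>nested_in X lt u v\<close> unfolding nested_in_def by blast
  consider "lt y1 y2" | "lt y2 y1" | "incomparable lt y1 y2" by blast
  then show False
  proof cases
    case 1
    show False
      by (rule notE[OF no_41 four_plus_one_induced[OF po, of x u y1 y2 v]])
        (use X x uv y1 y2 1 in simp_all)
  next
    case 2
    show False
      by (rule notE[OF no_41 four_plus_one_induced[OF po, of x u y2 y1 v]])
        (use X x uv y1 y2 2 in simp_all)
  next
    case 3
    show False
      by (rule notE[OF no_Y Y_poset_induced[OF po, of x y1 y2 u v]])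
        (use X x uv y1 y2 3 \<open>y1 \<noteq> y2\<close> in simp_all)
  qed
qed

lemma incomparable_nested_in_same_outer:
  assumes po: "strict_poset X lt" and ff: "two_plus_two_free X lt"
    and no_311: "\<not> contains_induced X lt 5 three_plus_one_plus_one"
    and no_D: "\<not> contains_induced X lt 5 D_poset"
    and X: "v \<in> X" "u1 \<in> X" "u2 \<in> X" and "u1 \<noteq> u2" and "incomparable lt u1 u2"
    and "nested_in X lt u1 v" "nested_in X lt u2 v"
  shows False
proof -
  obtain x1 y1 where 1: "x1 \<in> X" "y1 \<in> X" "incomparable lt u1 v" "lt x1 u1" "incomparable lt x1 v"
      "lt u1 y1" "incomparable lt y1 v"
    using \<open>nested_in X lt u1 v\<close> unfolding nested_in_def by blast
  obtain x2 y2 where 2: "x2 \<in> X" "y2 \<in> X" "incomparable lt u2 v" "lt x2 u2" "incomparable lt x2 v"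
      "lt u2 y2" "incomparable lt y2 v"
    using \<open>nested_in X lt u2 v\<close> unfolding nested_in_def by blast
  note facts = X 1 2 \<open>u1 \<noteq> u2\<close> \<open>incomparable lt u1 u2\<close>
  have "\<not> lt u2 x1" "\<not> lt y1 u2" "u2 \<noteq> v"
    using strict_poset_trans[OF po] facts by blast+
  consider "\<not> lt x1 u2" "\<not> lt u2 y1" | "lt x1 u2" "lt u2 y1"
    | "lt x1 u2" "lt u1 y2" | "lt x2 u1" "lt u2 y1"
    using two_plus_two_freeD[OF ff] facts by metis
  then show False
  proof cases
    case 1
    show False
      by (rule notE[OF no_311 three_plus_one_plus_one_induced[OF po, of x1 u1 y1 v u2]])
        (use facts 1 \<open>\<not> lt u2 x1\<close> \<open>\<not> lt y1 u2\<close> \<open>u2 \<noteq> v\<close> in simp_all)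
  next
    case 2
    show False
      by (rule notE[OF no_D D_poset_induced[OF po, of x1 u1 u2 y1 v]]) (use facts 2 in simp_all)
  next
    case 3
    show False
      by (rule notE[OF no_D D_poset_induced[OF po, of x1 u1 u2 y2 v]]) (use facts 3 in simp_all)
  next
    case 4
    show False
      by (rule notE[OF no_D D_poset_induced[OF po, of x2 u1 u2 y1 v]]) (use facts 4 in simp_all)
  qed
qed

lemma nested_in_same_outer_eq:
  assumes po: "strict_poset X lt" and ff: "two_plus_two_free X lt"
    and no_41: "\<not> contains_induced X lt 5 four_plus_one"
    and no_311: "\<not> contains_induced X lt 5 three_plus_one_plus_one"
    and no_D: "\<not> contains_induced X lt 5 D_poset"
    and X: "v \<in> X" "u1 \<in> X" "u2 \<in> X" and "nested_in X lt u1 v" "nested_in X lt u2 v"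
  shows "u1 = u2"
proof (rule ccontr)
  assume "u1 \<noteq> u2"
  have chain_impossible: False
    if "lt u u'" "nested_in X lt u v" "nested_in X lt u' v" "u \<in> X" "u' \<in> X" for u u'
  proof -
    obtain x where "x \<in> X" "lt x u" "incomparable lt x v" "incomparable lt u v"
      using \<open>nested_in X lt u v\<close> unfolding nested_in_def by blast
    moreover obtain y where "y \<in> X" "lt u' y" "incomparable lt y v" "incomparable lt u' v"
      using \<open>nested_in X lt u' v\<close> unfolding nested_in_def by blast
    ultimately show False
      using notE[OF no_41 four_plus_one_induced[OF po, of x u u' y v]] X that by simp
  qed
  then have "incomparable lt u1 u2"
    using assms by blast
  then show False
    using incomparable_nested_in_same_outer[OF po ff no_311 no_D X \<open>u1 \<noteq> u2\<close>] assms by blast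
qed

lemma nested_in_down_set_mono:
  assumes po: "strict_poset X lt" and ff: "two_plus_two_free X lt"
    and no_41: "\<not> contains_induced X lt 5 four_plus_one"
    and no_Yd: "\<not> contains_induced X lt 5 Y_dual_poset"
    and X: "u \<in> X" "v1 \<in> X" "v2 \<in> X" "z \<in> X"
    and "nested_in X lt u v1" "nested_in X lt u v2" and "lt z v1"
  shows "lt z v2"
proof (rule ccontr)
  assume "\<not> lt z v2"
  obtain x1 where x1: "x1 \<in> X" "lt x1 u" "incomparable lt x1 v1"
    using \<open>nested_in X lt u v1\<close> unfolding nested_in_def by blast
  obtain x2 where x2: "x2 \<in> X" "lt x2 u" "incomparable lt x2 v2" and "incomparable lt u v2"
    using \<open>nested_in X lt u v2\<close> unfolding nested_in_def by blast
  have left_witness_v2: "x = x2" if "x \<in> X" "lt x u" "\<not> lt x v2" for x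
  proof -
    have "\<not> lt v2 x"
      using strict_poset_trans[OF po X(3) that(1) X(1)] that \<open>incomparable lt u v2\<close> by blast
    then show ?thesis
      using nested_in_left_witness_unique[OF po no_41 no_Yd X(1,3) that(1) x2(1)]
        \<open>nested_in X lt u v2\<close> that x2 by blast
  qed
  have "lt z u"
    using two_plus_two_freeD[OF ff X(4,2) x1(1) X(1) \<open>lt z v1\<close> x1(2)] x1(3) by blast
  then have "lt x2 v1"
    using left_witness_v2[OF X(4)] \<open>\<not> lt z v2\<close> \<open>lt z v1\<close> by blast
  moreover have "lt x1 v2"
    using left_witness_v2[OF x1(1,2)] \<open>lt x2 v1\<close> x1(3) by blast
  ultimately show False
    using two_plus_two_freeD[OF ff x2(1) X(2) x1(1) X(3)] x1(3) x2(3) by blast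
qed

lemma nested_in_up_set_mono:
  assumes po: "strict_poset X lt" and ff: "two_plus_two_free X lt"
    and no_41: "\<not> contains_induced X lt 5 four_plus_one"
    and no_Y: "\<not> contains_induced X lt 5 Y_poset"
    and X: "u \<in> X" "v1 \<in> X" "v2 \<in> X" "z \<in> X"
    and "nested_in X lt u v1" "nested_in X lt u v2" and "lt v1 z"
  shows "lt v2 z"
proof (rule ccontr)
  assume "\<not> lt v2 z"
  obtain y1 where y1: "y1 \<in> X" "lt u y1" "incomparable lt y1 v1"
    using \<open>nested_in X lt u v1\<close> unfolding nested_in_def by blast
  obtain y2 where y2: "y2 \<in> X" "lt u y2" "incomparable lt y2 v2" and "incomparable lt u v2"
    using \<open>nested_in X lt u v2\<close> unfolding nested_in_def by blast
  have right_witness_v2: "y = y2" if "y \<in> X" "lt u y" "\<not> lt v2 y" for y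
  proof -
    have "\<not> lt y v2"
      using strict_poset_trans[OF po X(1) that(1) X(3)] that \<open>incomparable lt u v2\<close> by blast
    then show ?thesis
      using nested_in_right_witness_unique[OF po no_41 no_Y X(1,3) that(1) y2(1)]
        \<open>nested_in X lt u v2\<close> that y2 by blast
  qed
  have "lt u z"
    using two_plus_two_freeD[OF ff X(1) y1(1) X(2,4) y1(2) \<open>lt v1 z\<close>] y1(3) by blast
  then have "lt v1 y2"
    using right_witness_v2[OF X(4)] \<open>\<not> lt v2 z\<close> \<open>lt v1 z\<close> by blast
  moreover have "lt v2 y1"
    using right_witness_v2[OF y1(1,2)] \<open>lt v1 y2\<close> y1(3) by blast
  ultimately show False
    using two_plus_two_freeD[OF ff X(2) y2(1) X(3) y1(1)] y1(3) y2(3) by blast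
qed

lemma nested_in_same_inner_eq:
  assumes po: "strict_poset X lt" and ff: "two_plus_two_free X lt" and tf: "twin_free X lt"
    and no_41: "\<not> contains_induced X lt 5 four_plus_one"
    and no_Y: "\<not> contains_induced X lt 5 Y_poset"
    and no_Yd: "\<not> contains_induced X lt 5 Y_dual_poset"
    and X: "u \<in> X" "v1 \<in> X" "v2 \<in> X" and "nested_in X lt u v1" "nested_in X lt u v2"
  shows "v1 = v2"
proof -
  have "twins X lt v1 v2"
    unfolding twins_def
    using nested_in_down_set_mono[OF po ff no_41 no_Yd X(1)]
      nested_in_up_set_mono[OF po ff no_41 no_Y X(1)] X assms(10,11) by blast
  then show ?thesis using tf X unfolding twin_free_def by blast
qed

lemma peeks_left_iff:
  assumes "interval_rep X lt L R" "x \<in> X" "u \<in> X" "v \<in> X"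
  shows "peeks_left L R x v u \<longleftrightarrow> lt x u \<and> incomparable lt x v"
proof -
  have "L x \<le> R x" "L u \<le> R u" "lt x u \<longleftrightarrow> R x < L u" "lt x v \<longleftrightarrow> R x < L v" "lt v x \<longleftrightarrow> R v < L x"
    using assms unfolding interval_rep_def by auto
  then show ?thesis unfolding peeks_left_def peeks_def meets_def by auto
qed

lemma peeks_right_iff:
  assumes "interval_rep X lt L R" "x \<in> X" "u \<in> X" "v \<in> X"
  shows "peeks_right L R x v u \<longleftrightarrow> lt u x \<and> incomparable lt x v"
proof -
  have "L x \<le> R x" "L u \<le> R u" "lt u x \<longleftrightarrow> R u < L x" "lt x v \<longleftrightarrow> R x < L v" "lt v x \<longleftrightarrow> R v < L x"
    using assms unfolding interval_rep_def by auto
  then show ?thesis unfolding peeks_right_def peeks_def meets_def by auto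
qed

lemma nested_in_unique_peekers:
  assumes rep: "interval_rep X lt L R" and po: "strict_poset X lt"
    and no_41: "\<not> contains_induced X lt 5 four_plus_one"
    and no_Y: "\<not> contains_induced X lt 5 Y_poset"
    and no_Yd: "\<not> contains_induced X lt 5 Y_dual_poset"
    and uv: "u \<in> X" "v \<in> X" and "nested_in X lt u v"
  shows "(\<exists>!x. x \<in> X \<and> peeks_left L R x v u) \<and> (\<exists>!y. y \<in> X \<and> peeks_right L R y v u)"
proof -
  obtain x y where x: "x \<in> X" "lt x u" "incomparable lt x v"
    and y: "y \<in> X" "lt u y" "incomparable lt y v"
    using \<open>nested_in X lt u v\<close> unfolding nested_in_def by blast
  note left_unique = nested_in_left_witness_unique[OF po no_41 no_Yd uv _ _ \<open>nested_in X lt u v\<close>]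
  note right_unique = nested_in_right_witness_unique[OF po no_41 no_Y uv _ _ \<open>nested_in X lt u v\<close>]
  have "\<exists>!x. x \<in> X \<and> peeks_left L R x v u"
  proof (rule ex1I)
    show "x \<in> X \<and> peeks_left L R x v u" using x peeks_left_iff[OF rep x(1) uv] by simp
    show "x' = x" if "x' \<in> X \<and> peeks_left L R x' v u" for x'
      using that x left_unique[of x' x] peeks_left_iff[OF rep _ uv, of x'] by blast
  qed
  moreover have "\<exists>!y. y \<in> X \<and> peeks_right L R y v u"
  proof (rule ex1I)
    show "y \<in> X \<and> peeks_right L R y v u" using y peeks_right_iff[OF rep y(1) uv] by simp
    show "y' = y" if "y' \<in> X \<and> peeks_right L R y' v u" for y'
      using that y right_unique[of y' y] peeks_right_iff[OF rep _ uv, of y'] by blast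
  qed
  ultimately show ?thesis ..
qed

theorem proposition13:
  fixes X :: "'a set" and lt :: "'a \<Rightarrow> 'a \<Rightarrow> bool"
  assumes "finite X"
    and "interval_order X lt"
    and "twin_free X lt"
    and "\<not> contains_induced X lt 5 four_plus_one"
    and "\<not> contains_induced X lt 5 three_plus_one_plus_one"
    and "\<not> contains_induced X lt 6 Z_poset"
    and "\<not> contains_induced X lt 5 D_poset"
    and "\<not> contains_induced X lt 5 Y_poset"
    and "\<not> contains_induced X lt 5 Y_dual_poset"
  shows "\<exists>L R. interval_rep X lt L R
     \<and> (\<forall>v\<in>X. \<forall>u1\<in>X. \<forall>u2\<in>X. u1 \<noteq> u2 \<and> u1 \<noteq> v \<and> u2 \<noteq> v \<longrightarrow>
            \<not> (strictly_contained L R u1 v \<and> strictly_contained L R u2 v))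
     \<and> (\<forall>u\<in>X. \<forall>v1\<in>X. \<forall>v2\<in>X. v1 \<noteq> v2 \<and> v1 \<noteq> u \<and> v2 \<noteq> u \<longrightarrow>
            \<not> (strictly_contained L R u v1 \<and> strictly_contained L R u v2))
     \<and> (\<forall>u\<in>X. \<forall>v\<in>X. strictly_contained L R u v \<longrightarrow>
            (\<exists>!x. x \<in> X \<and> peeks_left L R x v u) \<and> (\<exists>!y. y \<in> X \<and> peeks_right L R y v u))"
proof -
  have po: "strict_poset X lt" using assms(2) unfolding interval_order_def by blast
  have ff: "two_plus_two_free X lt" using interval_order_two_plus_two_free[OF assms(2)] .
  obtain L R where rep: "interval_rep X lt L R"
    and nested: "\<And>u v. u \<in> X \<Longrightarrow> v \<in> X \<Longrightarrow> strictly_contained L R u v \<Longrightarrow> nested_in X lt u v"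
    using interval_rep_strictly_contained_nested[OF assms(1) po ff] by blast
  show ?thesis
  proof (intro exI conjI)
    show "interval_rep X lt L R" by (fact rep)
    show "\<forall>v\<in>X. \<forall>u1\<in>X. \<forall>u2\<in>X. u1 \<noteq> u2 \<and> u1 \<noteq> v \<and> u2 \<noteq> v \<longrightarrow>
            \<not> (strictly_contained L R u1 v \<and> strictly_contained L R u2 v)"
    proof (intro ballI impI notI)
      fix v u1 u2 assume "v \<in> X" "u1 \<in> X" "u2 \<in> X" "u1 \<noteq> u2 \<and> u1 \<noteq> v \<and> u2 \<noteq> v"
        "strictly_contained L R u1 v \<and> strictly_contained L R u2 v"
      then show False using nested_in_same_outer_eq[OF po ff assms(4,5,7)] nested by blast
    qed
    show "\<forall>u\<in>X. \<forall>v1\<in>X. \<forall>v2\<in>X. v1 \<noteq> v2 \<and> v1 \<noteq> u \<and> v2 \<noteq> u \<longrightarrow>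
            \<not> (strictly_contained L R u v1 \<and> strictly_contained L R u v2)"
    proof (intro ballI impI notI)
      fix u v1 v2 assume "u \<in> X" "v1 \<in> X" "v2 \<in> X" "v1 \<noteq> v2 \<and> v1 \<noteq> u \<and> v2 \<noteq> u"
        "strictly_contained L R u v1 \<and> strictly_contained L R u v2"
      then show False using nested_in_same_inner_eq[OF po ff assms(3,4,8,9)] nested by blast
    qed
    show "\<forall>u\<in>X. \<forall>v\<in>X. strictly_contained L R u v \<longrightarrow>
            (\<exists>!x. x \<in> X \<and> peeks_left L R x v u) \<and> (\<exists>!y. y \<in> X \<and> peeks_right L R y v u)"
      using nested_in_unique_peekers[OF rep po assms(4,8,9)] nested by simp
  qed
qed

end
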